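(* Let $\mathcal{F}=(W,\preceq,\mathcal{V})$ be a finite poset model and $w_1,w_2\in W$. If $w_1\approx_\pm w_2$ then $w_1\equiv_\eta w_2$.
   Context: Fix a set PL of proposition letters. A poset model is $\mathcal{F}=(W,\preceq,\mathcal{V})$ with $(W,\preceq)$ a partial order and $\mathcal{V}:\mathrm{PL}\to\mathcal{P}(W)$. $[m;n]=\{i\in\mathbb{N}:m\le i\le n\}$, $[m;n)=\{i:m\le i<n\}$. An undirected path of length $\ell$ from $w$ is $\pi:[0;\ell]\to W$ with $\pi(0)=w$ and, for each $i\in[0;\ell)$, $\pi(i)\preceq\pi(i+1)$ or $\pi(i+1)\preceq\pi(i)$. A $\downarrow$-path is an undirected path of length $\ell\ge1$ with $\pi(\ell)\preceq\pi(\ell-1)$. A $\pm$-path is a $\downarrow$-path of length $\ell\ge2$ with $\pi(0)\preceq\pi(1)$. SLCS$_\eta$ formulas: $\Phi::=p\mid\neg\Phi\mid\Phi_1\wedge\Phi_2\mid\eta(\Phi_1,\Phi_2)$; $w\models p$ iff $w\in\mathcal{V}(p)$; negation, conjunction standard; $w\models\eta(\Phi_1,\Phi_2)$ iff some $\pm$-path $\pi:[0;\ell]\to W$ from $w$ has $\pi(\ell)\models\Phi_2$ and $\pi(i)\models\Phi_1$ for all $i\in[0;\ell)$. $w_1\equiv_\eta w_2$ means $w_1,w_2$ satisfy the same SLCS$_\eta$ formulas. A weak $\pm$-bisimulation is a symmetric relation $B\subseteq W\times W$ such that whenever $B(w_1,w_2)$: (1) for every $p$, $w_1\in\mathcal{V}(p)$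 iff $w_2\in\mathcal{V}(p)$; (2) for all $u_1,d_1\in W$ with ($w_1\preceq u_1$ or $u_1\preceq w_1$) and $d_1\preceq u_1$, there is a $\pm$-path $\pi_2:[0;\ell_2]\to W$ from $w_2$ with $B(d_1,\pi_2(\ell_2))$ and, for all $j\in[0;\ell_2)$, $B(w_1,\pi_2(j))$ or $B(u_1,\pi_2(j))$. $w_1\approx_\pm w_2$ iff some weak $\pm$-bisimulation contains $(w_1,w_2)$. *)

theory Defs
  imports Main
begin

definition poset_model :: "'w set \<Rightarrow> ('w \<Rightarrow> 'w \<Rightarrow> bool) \<Rightarrow> ('p \<Rightarrow> 'w set) \<Rightarrow> bool" where
  "poset_model W le V \<longleftrightarrow>
     (\<forall>x\<in>W. le x x) \<and>
     (\<forall>x\<in>W. \<forall>y\<in>W. \<forall>z\<in>W. le x y \<longrightarrow> le y z \<longrightarrow> le x z) \<and>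
     (\<forall>x\<in>W. \<forall>y\<in>W. le x y \<longrightarrow> le y x \<longrightarrow> x = y) \<and>
     (\<forall>p. V p \<subseteq> W)"

definition undir_path :: "'w set \<Rightarrow> ('w \<Rightarrow> 'w \<Rightarrow> bool) \<Rightarrow> 'w \<Rightarrow> (nat \<Rightarrow> 'w) \<Rightarrow> nat \<Rightarrow> bool" where
  "undir_path W le w \<pi> l \<longleftrightarrow>
     (\<forall>i\<le>l. \<pi> i \<in> W) \<and> \<pi> 0 = w \<and>
     (\<forall>i<l. le (\<pi> i) (\<pi> (Suc i)) \<or> le (\<pi> (Suc i)) (\<pi> i))"

definition down_path :: "'w set \<Rightarrow> ('w \<Rightarrow> 'w \<Rightarrow> bool) \<Rightarrow> 'w \<Rightarrow> (nat \<Rightarrow> 'w) \<Rightarrow> nat \<Rightarrow> bool" where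
  "down_path W le w \<pi> l \<longleftrightarrow>
     undir_path W le w \<pi> l \<and> l \<ge> 1 \<and> le (\<pi> l) (\<pi> (l - 1))"

definition pm_path :: "'w set \<Rightarrow> ('w \<Rightarrow> 'w \<Rightarrow> bool) \<Rightarrow> 'w \<Rightarrow> (nat \<Rightarrow> 'w) \<Rightarrow> nat \<Rightarrow> bool" where
  "pm_path W le w \<pi> l \<longleftrightarrow>
     down_path W le w \<pi> l \<and> l \<ge> 2 \<and> le (\<pi> 0) (\<pi> 1)"

datatype 'p slcs = Prop 'p | Neg "'p slcs" | Conj "'p slcs" "'p slcs" | Eta "'p slcs" "'p slcs"

fun sat :: "'w set \<Rightarrow> ('w \<Rightarrow> 'w \<Rightarrow> bool) \<Rightarrow> ('p \<Rightarrow> 'w set) \<Rightarrow> 'w \<Rightarrow> 'p slcs \<Rightarrow> bool" where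
  "sat W le V w (Prop p) \<longleftrightarrow> w \<in> V p"
| "sat W le V w (Neg \<phi>) \<longleftrightarrow> \<not> sat W le V w \<phi>"
| "sat W le V w (Conj \<phi> \<psi>) \<longleftrightarrow> sat W le V w \<phi> \<and> sat W le V w \<psi>"
| "sat W le V w (Eta \<phi> \<psi>) \<longleftrightarrow>
     (\<exists>\<pi> l. pm_path W le w \<pi> l \<and> sat W le V (\<pi> l) \<psi> \<and>
            (\<forall>i<l. sat W le V (\<pi> i) \<phi>))"

definition eta_equiv :: "'w set \<Rightarrow> ('w \<Rightarrow> 'w \<Rightarrow> bool) \<Rightarrow> ('p \<Rightarrow> 'w set) \<Rightarrow> 'w \<Rightarrow> 'w \<Rightarrow> bool" where
  "eta_equiv W le V w1 w2 \<longleftrightarrow> (\<forall>\<phi>. sat W le V w1 \<phi> = sat W le V w2 \<phi>)"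

definition weak_pm_bisim :: "'w set \<Rightarrow> ('w \<Rightarrow> 'w \<Rightarrow> bool) \<Rightarrow> ('p \<Rightarrow> 'w set) \<Rightarrow> ('w \<Rightarrow> 'w \<Rightarrow> bool) \<Rightarrow> bool" where
  "weak_pm_bisim W le V B \<longleftrightarrow>
     (\<forall>x y. B x y \<longrightarrow> x \<in> W \<and> y \<in> W) \<and>
     (\<forall>x y. B x y \<longrightarrow> B y x) \<and>
     (\<forall>w1 w2. B w1 w2 \<longrightarrow>
        (\<forall>p. w1 \<in> V p \<longleftrightarrow> w2 \<in> V p) \<and>
        (\<forall>u1\<in>W. \<forall>d1\<in>W. (le w1 u1 \<or> le u1 w1) \<longrightarrow> le d1 u1 \<longrightarrow>
           (\<exists>\<pi>2 l2. pm_path W le w2 \<pi>2 l2 \<and> B d1 (\<pi>2 l2) \<and>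
              (\<forall>j<l2. B w1 (\<pi>2 j) \<or> B u1 (\<pi>2 j)))))"

definition weak_pm_bisimilar :: "'w set \<Rightarrow> ('w \<Rightarrow> 'w \<Rightarrow> bool) \<Rightarrow> ('p \<Rightarrow> 'w set) \<Rightarrow> 'w \<Rightarrow> 'w \<Rightarrow> bool" where
  "weak_pm_bisimilar W le V w1 w2 \<longleftrightarrow> (\<exists>B. weak_pm_bisim W le V B \<and> B w1 w2)"

end

theory Submission
  imports Defs
begin

text \<open>A \<open>\<eta>(\<Phi>\<^sub>1, \<Phi>\<^sub>2)\<close>-witness is a \<open>\<down>\<close>-path along which \<open>\<Phi>\<^sub>1\<close> holds until \<open>\<Phi>\<^sub>2\<close>. Such a
  path from \<open>w\<^sub>1\<close> is matched from a bisimilar \<open>w\<^sub>2\<close> edge by edge: the bisimulation clause,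
  applied to the first edge \<open>w\<^sub>1 \<dash> \<pi>(1)\<close>, yields a \<open>\<plusminus>\<close>-path from \<open>w\<^sub>2\<close> whose inner points
  are bisimilar to \<open>w\<^sub>1\<close> or \<open>\<pi>(1)\<close> (both satisfy \<open>\<Phi>\<^sub>1\<close>) and whose end is bisimilar to
  \<open>\<pi>(1)\<close>; matching the rest of the path from there and concatenating gives a \<open>\<plusminus>\<close>-path
  witnessing \<open>\<eta>(\<Phi>\<^sub>1, \<Phi>\<^sub>2)\<close> at \<open>w\<^sub>2\<close>.\<close>

definition path_append :: "(nat \<Rightarrow> 'w) \<Rightarrow> nat \<Rightarrow> (nat \<Rightarrow> 'w) \<Rightarrow> nat \<Rightarrow> 'w" where
  "path_append \<rho> m \<sigma> = (\<lambda>i. if i \<le> m then \<rho> i else \<sigma> (i - m))"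

lemma path_append_right:
  assumes "\<sigma> 0 = \<rho> m" "m \<le> i"
  shows "path_append \<rho> m \<sigma> i = \<sigma> (i - m)"
  using assms by (cases "i = m") (auto simp: path_append_def)

lemma path_append_all_less:
  assumes "\<sigma> 0 = \<rho> m" "\<forall>i<m. P (\<rho> i)" "\<forall>i<n. P (\<sigma> i)"
  shows "\<forall>i<m + n. P (path_append \<rho> m \<sigma> i)"
proof (intro allI impI)
  fix i assume "i < m + n"
  then show "P (path_append \<rho> m \<sigma> i)"
    using assms by (cases "i < m") (auto simp: path_append_def path_append_right)
qed

lemma pm_path_append:
  assumes \<rho>: "pm_path W le y \<rho> m" and \<sigma>: "pm_path W le (\<rho> m) \<sigma> n"
  shows "pm_path W le y (path_append \<rho> m \<sigma>) (m + n)"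
proof -
  let ?c = "path_append \<rho> m \<sigma>"
  have \<sigma>0: "\<sigma> 0 = \<rho> m" and n: "n \<ge> 2"
    using \<sigma> by (auto simp: pm_path_def down_path_def undir_path_def)
  have c_right: "\<And>i. m \<le> i \<Longrightarrow> ?c i = \<sigma> (i - m)"
    using path_append_right[where \<sigma>=\<sigma> and \<rho>=\<rho> and m=m, OF \<sigma>0] .
  have "\<forall>i<m + n. le (?c i) (?c (Suc i)) \<or> le (?c (Suc i)) (?c i)"
  proof (intro allI impI)
    fix i assume i: "i < m + n"
    show "le (?c i) (?c (Suc i)) \<or> le (?c (Suc i)) (?c i)"
    proof (cases "i < m")
      case True
      then show ?thesis using \<rho> by (auto simp: path_append_def pm_path_def down_path_def undir_path_def)
    next
      case False
      then have "?c i = \<sigma> (i - m)" "?c (Suc i) = \<sigma> (Suc (i - m))" "i - m < n"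
        using i c_right by (auto simp: Suc_diff_le)
      then show ?thesis using \<sigma> by (auto simp: pm_path_def down_path_def undir_path_def)
    qed
  qed
  moreover have "?c (m + n) = \<sigma> n" "?c (m + n - 1) = \<sigma> (n - 1)"
    using c_right n by auto
  moreover have "\<forall>i\<le>m + n. ?c i \<in> W"
    using \<rho> \<sigma> by (auto simp: path_append_def pm_path_def down_path_def undir_path_def)
  ultimately show ?thesis
    using \<rho> \<sigma> n by (auto simp: path_append_def pm_path_def down_path_def undir_path_def)
qed

lemma down_path_tail:
  assumes "down_path W le x \<pi> l" "l \<ge> 2"
  shows "down_path W le (\<pi> 1) (\<lambda>i. \<pi> (Suc i)) (l - 1)"
proof -
  have "Suc (l - 1) = l" "Suc (l - 1 - 1) = l - 1" using assms(2) by auto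
  then show ?thesis
    using assms unfolding down_path_def undir_path_def
    by (auto simp: Suc_le_eq le_diff_conv2)
qed

lemma weak_pm_bisim_matchE:
  assumes "weak_pm_bisim W le V B" "B x y" "u \<in> W" "d \<in> W" "le x u \<or> le u x" "le d u"
  obtains \<rho> m where "pm_path W le y \<rho> m" "B d (\<rho> m)" "\<forall>j<m. B x (\<rho> j) \<or> B u (\<rho> j)"
  using assms unfolding weak_pm_bisim_def by blast

lemma weak_pm_bisim_down_path_transfer:
  assumes B: "weak_pm_bisim W le V B" and refl: "\<forall>x\<in>W. le x x"
    and P: "\<And>a b. B a b \<Longrightarrow> P a \<Longrightarrow> P b" and Q: "\<And>a b. B a b \<Longrightarrow> Q a \<Longrightarrow> Q b"
  shows "down_path W le x \<pi> l \<Longrightarrow> \<forall>i<l. P (\<pi> i) \<Longrightarrow> Q (\<pi> l) \<Longrightarrow> B x y \<Longrightarrow>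
    \<exists>\<rho> m. pm_path W le y \<rho> m \<and> Q (\<rho> m) \<and> (\<forall>i<m. P (\<rho> i))"
proof (induction l arbitrary: x \<pi> y rule: less_induct)
  case (less l)
  let ?z = "\<pi> 1"
  have \<pi>: "\<forall>i\<le>l. \<pi> i \<in> W" "\<pi> 0 = x" "\<forall>i<l. le (\<pi> i) (\<pi> (Suc i)) \<or> le (\<pi> (Suc i)) (\<pi> i)"
      and l: "l \<ge> 1" and last: "le (\<pi> l) (\<pi> (l - 1))"
    using less.prems(1) unfolding down_path_def undir_path_def by simp_all
  have x: "x \<in> W" and z: "?z \<in> W" and edge: "le x ?z \<or> le ?z x"
    using \<pi> l by (auto simp: Suc_le_eq)
  have Px: "P x" using less.prems(2) l \<pi>(2) by auto
  obtain \<rho> m where \<rho>: "pm_path W le y \<rho> m" "B ?z (\<rho> m)" "\<forall>j<m. P (\<rho> j)"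
  \<comment> \<open>If \<open>\<pi>(1) \<preceq> x\<close>, match with \<open>u = x\<close>: the inner points are then bisimilar to \<open>x\<close>
    alone, which matters for \<open>l = 1\<close>, where \<open>\<pi>(1)\<close> need not satisfy \<open>P\<close>.\<close>
  proof (cases "le ?z x")
    case True
    have xx: "le x x \<or> le x x" using refl x by blast
    obtain \<rho> m where \<rho>: "pm_path W le y \<rho> m" "B ?z (\<rho> m)"
        and inner: "\<forall>j<m. B x (\<rho> j) \<or> B x (\<rho> j)"
      by (rule weak_pm_bisim_matchE[OF B less.prems(4) x z xx True])
    have "\<forall>j<m. P (\<rho> j)" using inner P Px by blast
    with \<rho> show ?thesis by (rule that)
  next
    case False
    then have "l \<noteq> 1" using last \<pi>(2) by auto
    then have "P ?z" using less.prems(2) l by simp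
    have zz: "le ?z ?z" using refl z by blast
    obtain \<rho> m where \<rho>: "pm_path W le y \<rho> m" "B ?z (\<rho> m)"
        and inner: "\<forall>j<m. B x (\<rho> j) \<or> B ?z (\<rho> j)"
      by (rule weak_pm_bisim_matchE[OF B less.prems(4) z z edge zz])
    have "\<forall>j<m. P (\<rho> j)" using inner P Px \<open>P ?z\<close> by blast
    with \<rho> show ?thesis by (rule that)
  qed
  show ?case
  proof (cases "l = 1")
    case True
    then show ?thesis using \<rho> Q[OF \<rho>(2)] less.prems(3) by auto
  next
    case False
    then have l2: "l \<ge> 2" using l by auto
    obtain \<sigma> n where \<sigma>: "pm_path W le (\<rho> m) \<sigma> n" "Q (\<sigma> n)" "\<forall>i<n. P (\<sigma> i)"
      using less.IH[OF _ down_path_tail[OF less.prems(1) l2] _ _ \<rho>(2)] l2 less.prems(2,3)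
      by (auto simp: Suc_diff_1)
    have \<sigma>0: "\<sigma> 0 = \<rho> m" using \<sigma>(1) by (simp add: pm_path_def down_path_def undir_path_def)
    have "Q (path_append \<rho> m \<sigma> (m + n))"
      using \<sigma>(2) path_append_right[where \<sigma>=\<sigma> and \<rho>=\<rho> and m=m, OF \<sigma>0] by simp
    then show ?thesis
      using pm_path_append[OF \<rho>(1) \<sigma>(1)] path_append_all_less[OF \<sigma>0 \<rho>(3) \<sigma>(3)] by blast
  qed
qed

lemma weak_pm_bisim_sat:
  assumes B: "weak_pm_bisim W le V B" and refl: "\<forall>x\<in>W. le x x" and "B a b"
  shows "sat W le V a \<phi> \<longleftrightarrow> sat W le V b \<phi>"
  using \<open>B a b\<close>
proof (induction \<phi> arbitrary: a b)
  case (Prop p)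
  then show ?case using B unfolding weak_pm_bisim_def by auto
next
  case (Eta \<phi>\<^sub>1 \<phi>\<^sub>2)
  have IH1: "\<And>a b. B a b \<Longrightarrow> sat W le V a \<phi>\<^sub>1 \<Longrightarrow> sat W le V b \<phi>\<^sub>1"
    and IH2: "\<And>a b. B a b \<Longrightarrow> sat W le V a \<phi>\<^sub>2 \<Longrightarrow> sat W le V b \<phi>\<^sub>2"
    using Eta.IH by blast+
  have transfer: "sat W le V b (Eta \<phi>\<^sub>1 \<phi>\<^sub>2)"
    if ab: "B a b" and sat_a: "sat W le V a (Eta \<phi>\<^sub>1 \<phi>\<^sub>2)" for a b
  proof -
    obtain \<pi> l where \<pi>: "pm_path W le a \<pi> l" "sat W le V (\<pi> l) \<phi>\<^sub>2" "\<forall>i<l. sat W le V (\<pi> i) \<phi>\<^sub>1"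
      using sat_a by auto
    have "down_path W le a \<pi> l" using \<pi>(1) by (simp add: pm_path_def)
    from weak_pm_bisim_down_path_transfer
        [where P = "\<lambda>w. sat W le V w \<phi>\<^sub>1" and Q = "\<lambda>w. sat W le V w \<phi>\<^sub>2", OF B refl IH1 IH2 this \<pi>(3) \<pi>(2) ab]
    show ?thesis by simp
  qed
  have "B b a" using Eta.prems B unfolding weak_pm_bisim_def by blast
  then show ?case using transfer Eta.prems by blast
qed auto

theorem lemma12:
  fixes W :: "'w set" and le :: "'w \<Rightarrow> 'w \<Rightarrow> bool" and V :: "'p \<Rightarrow> 'w set"
  assumes "poset_model W le V" and "finite W"
    and "w1 \<in> W" and "w2 \<in> W"
    and "weak_pm_bisimilar W le V w1 w2"
  shows "eta_equiv W le V w1 w2"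
proof -
  obtain B where B: "weak_pm_bisim W le V B" and "B w1 w2"
    using assms(5) unfolding weak_pm_bisimilar_def by blast
  have "\<forall>x\<in>W. le x x" using assms(1) unfolding poset_model_def by blast
  then show ?thesis
    unfolding eta_equiv_def using weak_pm_bisim_sat[OF B _ \<open>B w1 w2\<close>] by blast
qed

end
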